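(* Let $X\in\mathbb{R}^{n\times D}$, $y\in\mathbb{R}^n$, $\lambda_2>0$. Let $\mathcal{Q}$ be a partition of $\{1,\dots,D\}$ and $\mathcal{P}$ a partition of $\{1,\dots,n\}$ such that $(\mathcal{P},\mathcal{Q})$ is equitable on $X$ and $(X^\top y)_{j_1}=(X^\top y)_{j_2}$ whenever $j_1,j_2$ share a color of $\mathcal{Q}$. Set $X'=\Pi_{\mathcal{P}}^{\mathrm{Scaled}}X\Pi_{\mathcal{Q}}$, $y'=\Pi_{\mathcal{P}}^{\mathrm{Scaled}}y$, $W'=\Pi_{\mathcal{P}}^\top\Pi_{\mathcal{P}}$, and let $Q'$ be the $|\mathcal{Q}|\times|\mathcal{Q}|$ diagonal matrix with $Q'_{TT}=\lambda_2|T|$. If $w'\in\mathbb{R}^{|\mathcal{Q}|}$ satisfies $\big((X')^\top W'X'+Q'\big)w'=(X')^\top W'y'$ (the optimality condition of the reduced ridge problem), then $\Pi_{\mathcal{Q}}w'=(X^\top X+\lambda_2I)^{-1}X^\top y$.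
   Context: A partition of a finite set is a set of nonempty pairwise disjoint subsets ("colors") covering it. A pair $(\mathcal{P},\mathcal{Q})$ of partitions of the row and column indices of $A$ is equitable on $A$ if for every $S\in\mathcal{P}$, $T\in\mathcal{Q}$: $\sum_{j\in T}A_{ij}$ is the same for all $i\in S$ and $\sum_{i\in S}A_{ij}$ is the same for all $j\in T$. For a partition $\mathcal{Q}$ of $\{1,\dots,D\}$, $\Pi_{\mathcal{Q}}\in\{0,1\}^{D\times|\mathcal{Q}|}$ has $(\Pi_{\mathcal{Q}})_{jT}=1$ iff $j\in T$; $\Pi^{\mathrm{Scaled}}_{\mathcal{Q}}\in\mathbb{R}^{|\mathcal{Q}|\times D}$ has entries $1/|T|$ if $j\in T$ and $0$ otherwise; similarly for $\mathcal{P}$. *)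

theory Defs
  imports "Jordan_Normal_Form.Gauss_Jordan_Elimination"
begin

text \<open>A partition of a finite set S, with its colors listed in some (arbitrary) fixed order,
  so that the columns of the indicator matrices can be indexed by 0..<length Cs.\<close>
definition is_partition_list :: "nat set \<Rightarrow> nat set list \<Rightarrow> bool" where
  "is_partition_list S Cs \<longleftrightarrow> distinct Cs \<and> (\<forall>C\<in>set Cs. C \<noteq> {}) \<and>
     (\<forall>C1\<in>set Cs. \<forall>C2\<in>set Cs. C1 \<noteq> C2 \<longrightarrow> C1 \<inter> C2 = {}) \<and> \<Union>(set Cs) = S"

definition equitable :: "nat set list \<Rightarrow> nat set list \<Rightarrow> real mat \<Rightarrow> bool" where
  "equitable Ps Qs A \<longleftrightarrow>
     (\<forall>S\<in>set Ps. \<forall>T\<in>set Qs.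
        (\<forall>i1\<in>S. \<forall>i2\<in>S. (\<Sum>j\<in>T. A $$ (i1, j)) = (\<Sum>j\<in>T. A $$ (i2, j))) \<and>
        (\<forall>j1\<in>T. \<forall>j2\<in>T. (\<Sum>i\<in>S. A $$ (i, j1)) = (\<Sum>i\<in>S. A $$ (i, j2))))"

definition Pi_mat :: "nat \<Rightarrow> nat set list \<Rightarrow> real mat" where
  "Pi_mat D Qs = mat D (length Qs) (\<lambda>(j, t). if j \<in> Qs ! t then 1 else 0)"

definition Pi_scaled :: "nat \<Rightarrow> nat set list \<Rightarrow> real mat" where
  "Pi_scaled D Qs = mat (length Qs) D (\<lambda>(t, j). if j \<in> Qs ! t then 1 / real (card (Qs ! t)) else 0)"

end

theory Submission
  imports Defs "Jordan_Normal_Form.Determinant"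
begin

(* Write Pi for Pi_mat D Qs and A = X^T X + lambda2 I. Row equitability says X Pi = Pi_P X',
   i.e. the columns of X Pi are constant on the colors of P; together with
   Pi_P^T Pi_P Pi_P^Scaled = Pi_P^T this turns the reduced system into the projected normal
   equation Pi^T A (Pi w') = Pi^T X^T y. Column equitability makes A (Pi w') constant on the
   colors of Q, and X^T y is constant on them by hypothesis. A vector that is constant on the
   colors is determined by its color sums, so A (Pi w') = X^T y; finally A is invertible since
   it is positive definite. *)

lemma is_partition_list_nth_unique:
  assumes "is_partition_list S Cs" "s < length Cs" "t < length Cs" "j \<in> Cs ! s" "j \<in> Cs ! t"
  shows "s = t"
proof (rule ccontr)
  assume "s \<noteq> t"
  with assms(1-3) have "Cs ! s \<noteq> Cs ! t"
    by (simp add: is_partition_list_def nth_eq_iff_index_eq)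
  moreover have "Cs ! s \<in> set Cs" "Cs ! t \<in> set Cs"
    using assms(2,3) by simp_all
  ultimately have "Cs ! s \<inter> Cs ! t = {}"
    using assms(1) unfolding is_partition_list_def by blast
  with assms(4,5) show False by blast
qed

lemma is_partition_list_nth_subset:
  "is_partition_list S Cs \<Longrightarrow> t < length Cs \<Longrightarrow> Cs ! t \<subseteq> S"
  unfolding is_partition_list_def using nth_mem by blast

lemma is_partition_list_less:
  "is_partition_list {0..<m} Cs \<Longrightarrow> C \<in> set Cs \<Longrightarrow> j \<in> C \<Longrightarrow> j < m"
  unfolding is_partition_list_def by auto

lemma is_partition_list_obtain_nth:
  assumes "is_partition_list S Cs" "j \<in> S"
  obtains t where "t < length Cs" "j \<in> Cs ! t"
proof -
  from assms obtain C where "C \<in> set Cs" "j \<in> C"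
    unfolding is_partition_list_def by blast
  then obtain t where "t < length Cs" "Cs ! t = C"
    by (auto simp: in_set_conv_nth)
  with \<open>j \<in> C\<close> that show thesis by blast
qed

lemma is_partition_list_card_nth_pos:
  assumes "is_partition_list S Cs" "finite S" "t < length Cs"
  shows "card (Cs ! t) > 0"
proof -
  have "Cs ! t \<noteq> {}"
    using assms(1) nth_mem[OF assms(3)] unfolding is_partition_list_def by blast
  moreover have "finite (Cs ! t)"
    using is_partition_list_nth_subset[OF assms(1,3)] assms(2) by (rule finite_subset)
  ultimately show ?thesis by (simp add: card_gt_0_iff)
qed

definition indicator_vec :: "nat \<Rightarrow> nat set \<Rightarrow> 'a :: zero_neq_one vec" where
  "indicator_vec m C = vec m (\<lambda>j. if j \<in> C then 1 else 0)"

lemma indicator_vec_carrier [simp]: "indicator_vec m C \<in> carrier_vec m"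
  unfolding indicator_vec_def by simp

lemma scalar_prod_indicator_vec:
  fixes v :: "'a :: comm_semiring_1 vec"
  assumes "v \<in> carrier_vec m" "C \<subseteq> {0..<m}"
  shows "v \<bullet> indicator_vec m C = (\<Sum>j\<in>C. v $ j)"
proof -
  have "v \<bullet> indicator_vec m C = (\<Sum>j\<in>{0..<m}. if j \<in> C then v $ j else 0)"
    using assms(1) unfolding scalar_prod_def indicator_vec_def by (intro sum.cong) auto
  also have "\<dots> = (\<Sum>j\<in>C. v $ j)"
    using assms(2) by (simp add: sum.If_cases Int_absorb1)
  finally show ?thesis .
qed

lemma indicator_vec_scalar_prod:
  fixes v :: "'a :: comm_semiring_1 vec"
  assumes "v \<in> carrier_vec m" "C \<subseteq> {0..<m}"
  shows "indicator_vec m C \<bullet> v = (\<Sum>j\<in>C. v $ j)"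
  using assms by (simp add: comm_scalar_prod[of _ m] scalar_prod_indicator_vec)

lemma Pi_mat_carrier [simp]: "Pi_mat m Cs \<in> carrier_mat m (length Cs)"
  unfolding Pi_mat_def by simp

lemma Pi_scaled_carrier [simp]: "Pi_scaled m Cs \<in> carrier_mat (length Cs) m"
  unfolding Pi_scaled_def by simp

lemma dim_Pi_mat [simp]:
  "dim_row (Pi_mat m Cs) = m" "dim_col (Pi_mat m Cs) = length Cs"
  unfolding Pi_mat_def by simp_all

lemma dim_Pi_scaled [simp]:
  "dim_row (Pi_scaled m Cs) = length Cs" "dim_col (Pi_scaled m Cs) = m"
  unfolding Pi_scaled_def by simp_all

lemma col_Pi_mat: "t < length Cs \<Longrightarrow> col (Pi_mat m Cs) t = indicator_vec m (Cs ! t)"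
  unfolding Pi_mat_def indicator_vec_def by auto

lemma row_Pi_scaled:
  "t < length Cs \<Longrightarrow>
   row (Pi_scaled m Cs) t = (1 / real (card (Cs ! t))) \<cdot>\<^sub>v indicator_vec m (Cs ! t)"
  unfolding Pi_scaled_def indicator_vec_def by (rule eq_vecI) auto

lemma row_Pi_mat:
  assumes "is_partition_list {0..<m} Cs" "t < length Cs" "j \<in> Cs ! t"
  shows "row (Pi_mat m Cs) j = unit_vec (length Cs) t"
proof (rule eq_vecI)
  fix k assume "k < dim_vec (unit_vec (length Cs) t :: real vec)"
  then have k: "k < length Cs" by simp
  have "j < m" using is_partition_list_nth_subset[OF assms(1,2)] assms(3) by auto
  moreover have "j \<in> Cs ! k \<longleftrightarrow> k = t"
    using is_partition_list_nth_unique[OF assms(1) k assms(2) _ assms(3)] assms(3) by blast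
  ultimately show "row (Pi_mat m Cs) j $ k = unit_vec (length Cs) t $ k"
    using k by (simp add: Pi_mat_def unit_vec_def)
qed (simp)

lemma Pi_mat_mult_vec_index:
  assumes "is_partition_list {0..<m} Cs" "t < length Cs" "j \<in> Cs ! t"
    and "v \<in> carrier_vec (length Cs)"
  shows "(Pi_mat m Cs *\<^sub>v v) $ j = v $ t"
proof -
  have "j < m" using is_partition_list_nth_subset[OF assms(1,2)] assms(3) by auto
  with assms show ?thesis by (simp add: row_Pi_mat)
qed

lemma Pi_mat_mult_index:
  assumes "is_partition_list {0..<m} Cs" "t < length Cs" "j \<in> Cs ! t"
    and "B \<in> carrier_mat (length Cs) c" "k < c"
  shows "(Pi_mat m Cs * B) $$ (j, k) = B $$ (t, k)"
proof -
  have "j < m" using is_partition_list_nth_subset[OF assms(1,2)] assms(3) by auto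
  with assms show ?thesis by (simp add: row_Pi_mat)
qed

lemma mult_Pi_mat_index:
  assumes "A \<in> carrier_mat r m" "Cs ! t \<subseteq> {0..<m}" "i < r" "t < length Cs"
  shows "(A * Pi_mat m Cs) $$ (i, t) = (\<Sum>j\<in>Cs ! t. A $$ (i, j))"
proof -
  have "(A * Pi_mat m Cs) $$ (i, t) = row A i \<bullet> indicator_vec m (Cs ! t)"
    using assms by (simp add: col_Pi_mat)
  also have "\<dots> = (\<Sum>j\<in>Cs ! t. A $$ (i, j))"
    using assms by (subst scalar_prod_indicator_vec) (auto intro!: sum.cong)
  finally show ?thesis .
qed

lemma transpose_Pi_mat_mult_index:
  assumes "A \<in> carrier_mat m c" "Cs ! t \<subseteq> {0..<m}" "t < length Cs" "j < c"
  shows "(transpose_mat (Pi_mat m Cs) * A) $$ (t, j) = (\<Sum>i\<in>Cs ! t. A $$ (i, j))"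
proof -
  have "(transpose_mat (Pi_mat m Cs) * A) $$ (t, j) = indicator_vec m (Cs ! t) \<bullet> col A j"
    using assms by (simp add: col_Pi_mat)
  also have "\<dots> = (\<Sum>i\<in>Cs ! t. A $$ (i, j))"
    using assms by (subst indicator_vec_scalar_prod) (auto intro!: sum.cong)
  finally show ?thesis .
qed

lemma transpose_Pi_mat_mult_vec_index:
  assumes "u \<in> carrier_vec m" "Cs ! t \<subseteq> {0..<m}" "t < length Cs"
  shows "(transpose_mat (Pi_mat m Cs) *\<^sub>v u) $ t = (\<Sum>j\<in>Cs ! t. u $ j)"
  using assms by (simp add: col_Pi_mat indicator_vec_scalar_prod)

lemma Pi_scaled_mult_index:
  assumes "A \<in> carrier_mat m c" "Cs ! t \<subseteq> {0..<m}" "t < length Cs" "j < c"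
  shows "(Pi_scaled m Cs * A) $$ (t, j) = (\<Sum>i\<in>Cs ! t. A $$ (i, j)) / real (card (Cs ! t))"
proof -
  have "(Pi_scaled m Cs * A) $$ (t, j)
      = (1 / real (card (Cs ! t))) * (indicator_vec m (Cs ! t) \<bullet> col A j)"
    using assms by (simp add: row_Pi_scaled)
  also have "\<dots> = (\<Sum>i\<in>Cs ! t. A $$ (i, j)) / real (card (Cs ! t))"
    using assms by (subst indicator_vec_scalar_prod) (auto intro!: sum.cong)
  finally show ?thesis .
qed

lemma transpose_Pi_mat_mult_Pi_mat:
  assumes "is_partition_list {0..<m} Cs"
  shows "transpose_mat (Pi_mat m Cs) * Pi_mat m Cs = mat_diag (length Cs) (\<lambda>t. real (card (Cs ! t)))"
proof (rule eq_matI)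
  fix s t assume "s < dim_row (mat_diag (length Cs) (\<lambda>t. real (card (Cs ! t))))"
    and "t < dim_col (mat_diag (length Cs) (\<lambda>t. real (card (Cs ! t))))"
  then have st: "s < length Cs" "t < length Cs" by (simp_all add: mat_diag_def)
  have sub: "Cs ! s \<subseteq> {0..<m}" using is_partition_list_nth_subset[OF assms st(1)] .
  have "(transpose_mat (Pi_mat m Cs) * Pi_mat m Cs) $$ (s, t) = (\<Sum>i\<in>Cs ! s. Pi_mat m Cs $$ (i, t))"
    using st sub by (intro transpose_Pi_mat_mult_index) auto
  also have "\<dots> = (\<Sum>i\<in>Cs ! s. if i \<in> Cs ! t then 1 else 0)"
    using st sub by (intro sum.cong) (auto simp: Pi_mat_def)
  also have "\<dots> = (if s = t then real (card (Cs ! t)) else 0)"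
  proof (cases "s = t")
    case False
    then have "i \<notin> Cs ! t" if "i \<in> Cs ! s" for i
      using is_partition_list_nth_unique[OF assms st that] by blast
    with False show ?thesis by simp
  qed simp
  finally show "(transpose_mat (Pi_mat m Cs) * Pi_mat m Cs) $$ (s, t)
      = mat_diag (length Cs) (\<lambda>t. real (card (Cs ! t))) $$ (s, t)"
    using st by (simp add: mat_diag_def)
qed (simp_all add: mat_diag_def)

lemma transpose_Pi_mat_mult_Pi_mat_mult_Pi_scaled:
  assumes "is_partition_list {0..<m} Cs"
  shows "transpose_mat (Pi_mat m Cs) * Pi_mat m Cs * Pi_scaled m Cs = transpose_mat (Pi_mat m Cs)"
  unfolding transpose_Pi_mat_mult_Pi_mat[OF assms] mat_diag_mult_left[OF Pi_scaled_carrier]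
proof (rule eq_matI)
  fix t j assume "t < dim_row (transpose_mat (Pi_mat m Cs))" "j < dim_col (transpose_mat (Pi_mat m Cs))"
  then have t: "t < length Cs" and "j < m" by simp_all
  moreover have "card (Cs ! t) \<noteq> 0"
    using is_partition_list_card_nth_pos[OF assms _ t] by simp
  ultimately show "mat (length Cs) m (\<lambda>(i, j). real (card (Cs ! i)) * Pi_scaled m Cs $$ (i, j)) $$ (t, j)
      = transpose_mat (Pi_mat m Cs) $$ (t, j)"
    by (simp add: Pi_scaled_def Pi_mat_def)
qed simp_all

definition constant_on_colors :: "nat set list \<Rightarrow> 'a vec \<Rightarrow> bool" where
  "constant_on_colors Cs v \<longleftrightarrow> (\<forall>C\<in>set Cs. \<forall>j1\<in>C. \<forall>j2\<in>C. v $ j1 = v $ j2)"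

lemma constant_on_colorsD:
  "constant_on_colors Cs v \<Longrightarrow> C \<in> set Cs \<Longrightarrow> j1 \<in> C \<Longrightarrow> j2 \<in> C \<Longrightarrow> v $ j1 = v $ j2"
  unfolding constant_on_colors_def by blast

lemma constant_on_colors_add:
  assumes "is_partition_list {0..<m} Cs" "u \<in> carrier_vec m" "v \<in> carrier_vec m"
    and "constant_on_colors Cs u" "constant_on_colors Cs v"
  shows "constant_on_colors Cs (u + v)"
  unfolding constant_on_colors_def
proof (intro ballI)
  fix C j1 j2 assume C: "C \<in> set Cs" "j1 \<in> C" "j2 \<in> C"
  have "j1 < m" "j2 < m" using is_partition_list_less[OF assms(1) C(1)] C(2,3) by auto
  with assms(2,3) constant_on_colorsD[OF assms(4) C] constant_on_colorsD[OF assms(5) C]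
  show "(u + v) $ j1 = (u + v) $ j2" by simp
qed

lemma constant_on_colors_smult:
  assumes "is_partition_list {0..<m} Cs" "v \<in> carrier_vec m" "constant_on_colors Cs v"
  shows "constant_on_colors Cs (c \<cdot>\<^sub>v v)"
  unfolding constant_on_colors_def
proof (intro ballI)
  fix C j1 j2 assume C: "C \<in> set Cs" "j1 \<in> C" "j2 \<in> C"
  have "j1 < m" "j2 < m" using is_partition_list_less[OF assms(1) C(1)] C(2,3) by auto
  with assms(2) constant_on_colorsD[OF assms(3) C]
  show "(c \<cdot>\<^sub>v v) $ j1 = (c \<cdot>\<^sub>v v) $ j2" by simp
qed

lemma constant_on_colors_Pi_mat_mult_vec:
  assumes "is_partition_list {0..<m} Cs" "v \<in> carrier_vec (length Cs)"
  shows "constant_on_colors Cs (Pi_mat m Cs *\<^sub>v v)"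
  unfolding constant_on_colors_def
proof (intro ballI)
  fix C j1 j2 assume "C \<in> set Cs" "j1 \<in> C" "j2 \<in> C"
  then obtain t where "t < length Cs" "j1 \<in> Cs ! t" "j2 \<in> Cs ! t"
    by (auto simp: in_set_conv_nth)
  with assms show "(Pi_mat m Cs *\<^sub>v v) $ j1 = (Pi_mat m Cs *\<^sub>v v) $ j2"
    by (simp add: Pi_mat_mult_vec_index)
qed

lemma constant_on_colors_eq_if_color_sums_eq:
  assumes Cs: "is_partition_list {0..<m} Cs" and u: "u \<in> carrier_vec m" and v: "v \<in> carrier_vec m"
    and sums: "transpose_mat (Pi_mat m Cs) *\<^sub>v u = transpose_mat (Pi_mat m Cs) *\<^sub>v v"
    and "constant_on_colors Cs u" "constant_on_colors Cs v"
  shows "u = v"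
proof (rule eq_vecI)
  fix j assume "j < dim_vec v"
  then obtain t where t: "t < length Cs" "j \<in> Cs ! t"
    using is_partition_list_obtain_nth[OF Cs] v by auto
  have sub: "Cs ! t \<subseteq> {0..<m}" using is_partition_list_nth_subset[OF Cs t(1)] .
  have color_sum: "(transpose_mat (Pi_mat m Cs) *\<^sub>v x) $ t = real (card (Cs ! t)) * x $ j"
    if "x \<in> carrier_vec m" "constant_on_colors Cs x" for x
  proof -
    have "(\<Sum>i\<in>Cs ! t. x $ i) = (\<Sum>i\<in>Cs ! t. x $ j)"
      using constant_on_colorsD[OF that(2) nth_mem[OF t(1)] _ t(2)] by (intro sum.cong) auto
    then show ?thesis using transpose_Pi_mat_mult_vec_index[OF that(1) sub t(1)] by simp
  qed
  have "card (Cs ! t) > 0" using is_partition_list_card_nth_pos[OF Cs _ t(1)] by simp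
  with sums color_sum[OF u] color_sum[OF v] assms(5,6) show "u $ j = v $ j" by simp
qed (use u v in simp)

lemma equitable_row_sums:
  assumes "equitable Ps Qs X" "s < length Ps" "t < length Qs" "i1 \<in> Ps ! s" "i2 \<in> Ps ! s"
  shows "(\<Sum>j\<in>Qs ! t. X $$ (i1, j)) = (\<Sum>j\<in>Qs ! t. X $$ (i2, j))"
  using assms nth_mem[OF assms(2)] nth_mem[OF assms(3)] unfolding equitable_def by blast

lemma equitable_col_sums:
  assumes "equitable Ps Qs X" "s < length Ps" "t < length Qs" "j1 \<in> Qs ! t" "j2 \<in> Qs ! t"
  shows "(\<Sum>i\<in>Ps ! s. X $$ (i, j1)) = (\<Sum>i\<in>Ps ! s. X $$ (i, j2))"
  using assms nth_mem[OF assms(2)] nth_mem[OF assms(3)] unfolding equitable_def by blast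

lemma equitable_mult_Pi_mat:
  assumes X: "X \<in> carrier_mat n D" and P: "is_partition_list {0..<n} Ps"
    and Q: "is_partition_list {0..<D} Qs" and eq: "equitable Ps Qs X"
  shows "X * Pi_mat D Qs = Pi_mat n Ps * (Pi_scaled n Ps * X * Pi_mat D Qs)"
proof (rule eq_matI)
  fix i t assume "i < dim_row (Pi_mat n Ps * (Pi_scaled n Ps * X * Pi_mat D Qs))"
    and "t < dim_col (Pi_mat n Ps * (Pi_scaled n Ps * X * Pi_mat D Qs))"
  then have i: "i < n" and t: "t < length Qs" by simp_all
  obtain s where s: "s < length Ps" "i \<in> Ps ! s"
    using is_partition_list_obtain_nth[OF P] i by auto
  have S: "i' < n" if "i' \<in> Ps ! s" for i'
    using is_partition_list_nth_subset[OF P s(1)] that by auto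
  have T: "Qs ! t \<subseteq> {0..<D}" using is_partition_list_nth_subset[OF Q t] .
  let ?row_sum = "\<lambda>i. \<Sum>j\<in>Qs ! t. X $$ (i, j)"
  have row_sum: "(X * Pi_mat D Qs) $$ (i', t) = ?row_sum i'" if "i' < n" for i'
    using mult_Pi_mat_index[OF X T that t] .
  have "(Pi_mat n Ps * (Pi_scaled n Ps * X * Pi_mat D Qs)) $$ (i, t)
      = (Pi_scaled n Ps * X * Pi_mat D Qs) $$ (s, t)"
    using X t by (intro Pi_mat_mult_index[OF P s]) auto
  also have "\<dots> = (Pi_scaled n Ps * (X * Pi_mat D Qs)) $$ (s, t)"
    by (simp only: assoc_mult_mat[OF Pi_scaled_carrier X Pi_mat_carrier])
  also have "\<dots> = (\<Sum>i'\<in>Ps ! s. (X * Pi_mat D Qs) $$ (i', t)) / real (card (Ps ! s))"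
    using X is_partition_list_nth_subset[OF P s(1)] s t by (intro Pi_scaled_mult_index) auto
  also have "\<dots> = (\<Sum>i'\<in>Ps ! s. ?row_sum i) / real (card (Ps ! s))"
    using S row_sum equitable_row_sums[OF eq s(1) t _ s(2)]
    by (intro arg_cong2[where f = "(/)"] sum.cong refl) simp_all
  also have "\<dots> = ?row_sum i"
    using is_partition_list_card_nth_pos[OF P _ s(1)] by simp
  also have "\<dots> = (X * Pi_mat D Qs) $$ (i, t)"
    using row_sum[OF i] by simp
  finally show "(X * Pi_mat D Qs) $$ (i, t) = (Pi_mat n Ps * (Pi_scaled n Ps * X * Pi_mat D Qs)) $$ (i, t)"
    by simp
qed (use X in simp_all)

lemma equitable_transpose_mult_Pi_mat:
  assumes X: "X \<in> carrier_mat n D" and P: "is_partition_list {0..<n} Ps"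
    and Q: "is_partition_list {0..<D} Qs" and eq: "equitable Ps Qs X"
  shows "transpose_mat (Pi_scaled n Ps * X * Pi_mat D Qs) * transpose_mat (Pi_mat n Ps)
       = transpose_mat (Pi_mat D Qs) * transpose_mat X"
proof -
  have "Pi_scaled n Ps * X * Pi_mat D Qs \<in> carrier_mat (length Ps) (length Qs)"
    using mult_carrier_mat[OF mult_carrier_mat[OF Pi_scaled_carrier X] Pi_mat_carrier] .
  then have "transpose_mat (Pi_scaled n Ps * X * Pi_mat D Qs) * transpose_mat (Pi_mat n Ps)
      = transpose_mat (Pi_mat n Ps * (Pi_scaled n Ps * X * Pi_mat D Qs))"
    using transpose_mult[OF Pi_mat_carrier] by simp
  also have "\<dots> = transpose_mat (Pi_mat D Qs) * transpose_mat X"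
    unfolding equitable_mult_Pi_mat[OF X P Q eq, symmetric] by (rule transpose_mult[OF X Pi_mat_carrier])
  finally show ?thesis .
qed

lemma equitable_transpose_Pi_mat_constant_on_colors:
  assumes X: "X \<in> carrier_mat n D" and P: "is_partition_list {0..<n} Ps"
    and Q: "is_partition_list {0..<D} Qs" and eq: "equitable Ps Qs X"
    and v: "v \<in> carrier_vec (length Ps)"
  shows "constant_on_colors Qs (transpose_mat X *\<^sub>v (Pi_mat n Ps *\<^sub>v v))"
proof -
  define B where "B = transpose_mat (Pi_mat n Ps) * X"
  have B: "B \<in> carrier_mat (length Ps) D"
    unfolding B_def using X by (intro mult_carrier_mat[of _ _ n]) auto
  have XtPp: "transpose_mat X *\<^sub>v (Pi_mat n Ps *\<^sub>v v) = transpose_mat B *\<^sub>v v"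
    unfolding B_def using X v
    by (simp add: transpose_mult[of _ "length Ps" n] assoc_mult_mat_vec[of _ D n _ "length Ps"])
  have cols: "col B j1 = col B j2" if t: "t < length Qs" "j1 \<in> Qs ! t" "j2 \<in> Qs ! t" for t j1 j2
  proof (rule eq_vecI)
    fix s assume "s < dim_vec (col B j2)"
    then have s: "s < length Ps" using B by simp
    have "B $$ (s, j) = (\<Sum>i\<in>Ps ! s. X $$ (i, j))" if "j \<in> Qs ! t" for j
      unfolding B_def using is_partition_list_nth_subset[OF Q t(1)] that
      by (intro transpose_Pi_mat_mult_index[OF X is_partition_list_nth_subset[OF P s] s]) auto
    moreover have "j1 < D" "j2 < D" using is_partition_list_nth_subset[OF Q t(1)] t by auto
    ultimately show "col B j1 $ s = col B j2 $ s"
      using B s t equitable_col_sums[OF eq s t] by simp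
  qed simp
  show ?thesis
    unfolding constant_on_colors_def XtPp
  proof (intro ballI)
    fix T j1 j2 assume "T \<in> set Qs" "j1 \<in> T" "j2 \<in> T"
    then obtain t where t: "t < length Qs" "j1 \<in> Qs ! t" "j2 \<in> Qs ! t"
      by (auto simp: in_set_conv_nth)
    then have "j1 < D" "j2 < D"
      using is_partition_list_nth_subset[OF Q t(1)] by auto
    with B cols[OF t] show "(transpose_mat B *\<^sub>v v) $ j1 = (transpose_mat B *\<^sub>v v) $ j2"
      by simp
  qed
qed

lemma smult_mat_mult_vec:
  assumes A: "A \<in> carrier_mat nr nc" and v: "v \<in> carrier_vec nc"
  shows "(k \<cdot>\<^sub>m A) *\<^sub>v v = k \<cdot>\<^sub>v (A *\<^sub>v v)"
proof (rule eq_vecI)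
  fix i assume "i < dim_vec (k \<cdot>\<^sub>v (A *\<^sub>v v))"
  then have i: "i < nr" using A by simp
  show "((k \<cdot>\<^sub>m A) *\<^sub>v v) $ i = (k \<cdot>\<^sub>v (A *\<^sub>v v)) $ i"
    using A i smult_scalar_prod_distrib[OF row_carrier_vec[OF i A] v] by simp
qed (use A in simp)

lemma ridge_matrix_mult_vec:
  fixes X :: "real mat"
  assumes "X \<in> carrier_mat n D" "v \<in> carrier_vec D"
  shows "(transpose_mat X * X + c \<cdot>\<^sub>m 1\<^sub>m D) *\<^sub>v v = transpose_mat X *\<^sub>v (X *\<^sub>v v) + c \<cdot>\<^sub>v v"
proof -
  have "(transpose_mat X * X + c \<cdot>\<^sub>m 1\<^sub>m D) *\<^sub>v v = (transpose_mat X * X) *\<^sub>v v + (c \<cdot>\<^sub>m 1\<^sub>m D) *\<^sub>v v"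
    using assms by (intro add_mult_distrib_mat_vec[of _ D D]) auto
  also have "(c \<cdot>\<^sub>m 1\<^sub>m D) *\<^sub>v v = c \<cdot>\<^sub>v v"
    using assms(2) by (simp add: smult_mat_mult_vec[of _ D D])
  finally show ?thesis using assms by simp
qed

lemma ridge_matrix_kernel_trivial:
  fixes X :: "real mat"
  assumes X: "X \<in> carrier_mat n D" and c: "c > 0" and v: "v \<in> carrier_vec D"
    and Av: "(transpose_mat X * X + c \<cdot>\<^sub>m 1\<^sub>m D) *\<^sub>v v = 0\<^sub>v D"
  shows "v = 0\<^sub>v D"
proof -
  have Xv: "X *\<^sub>v v \<in> carrier_vec n" using X v by simp
  have XtXv: "transpose_mat X *\<^sub>v (X *\<^sub>v v) \<in> carrier_vec D" using X v by simp
  have "0 = v \<bullet> ((transpose_mat X * X + c \<cdot>\<^sub>m 1\<^sub>m D) *\<^sub>v v)"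
    using Av v by simp
  also have "\<dots> = v \<bullet> (transpose_mat X *\<^sub>v (X *\<^sub>v v)) + v \<bullet> (c \<cdot>\<^sub>v v)"
    unfolding ridge_matrix_mult_vec[OF X v] using v XtXv by (intro scalar_prod_add_distrib) auto
  also have "v \<bullet> (transpose_mat X *\<^sub>v (X *\<^sub>v v)) = (X *\<^sub>v v) \<bullet> (X *\<^sub>v v)"
    using comm_scalar_prod[OF v XtXv] transpose_vec_mult_scalar[OF X v Xv] by simp
  also have "v \<bullet> (c \<cdot>\<^sub>v v) = c * (v \<bullet> v)"
    using v by simp
  finally have "(X *\<^sub>v v) \<bullet> (X *\<^sub>v v) + c * (v \<bullet> v) = 0" by simp
  moreover have "(X *\<^sub>v v) \<bullet> (X *\<^sub>v v) \<ge> 0" "v \<bullet> v \<ge> 0"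
    using conjugate_square_ge_0_vec[of "X *\<^sub>v v"] conjugate_square_ge_0_vec[of v] by simp_all
  ultimately have "c * (v \<bullet> v) = 0"
    using c by (simp add: add_nonneg_eq_0_iff)
  then have "v \<bullet> v = 0" using c by simp
  then show ?thesis using conjugate_square_eq_0_vec[OF v] by simp
qed

lemma ridge_matrix_inverse:
  fixes X :: "real mat"
  assumes X: "X \<in> carrier_mat n D" and c: "c > 0"
  obtains M where "mat_inverse (transpose_mat X * X + c \<cdot>\<^sub>m 1\<^sub>m D) = Some M"
    and "M * (transpose_mat X * X + c \<cdot>\<^sub>m 1\<^sub>m D) = 1\<^sub>m D" and "M \<in> carrier_mat D D"
proof -
  let ?A = "transpose_mat X * X + c \<cdot>\<^sub>m 1\<^sub>m D"
  have A: "?A \<in> carrier_mat D D" using X by simp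
  have "det ?A \<noteq> 0"
    using det_0_iff_vec_prod_zero_field[OF A] ridge_matrix_kernel_trivial[OF X c] by blast
  then have "?A \<in> Units (ring_mat TYPE(real) D ())"
    by (rule det_non_zero_imp_unit[OF A])
  then obtain M where "mat_inverse ?A = Some M"
    using mat_inverse(1)[OF A] by fastforce
  with mat_inverse(2)[OF A] that show thesis by blast
qed

lemma equitable_ridge_matrix_constant_on_colors:
  fixes X :: "real mat"
  assumes X: "X \<in> carrier_mat n D" and P: "is_partition_list {0..<n} Ps"
    and Q: "is_partition_list {0..<D} Qs" and eq: "equitable Ps Qs X"
    and v: "v \<in> carrier_vec (length Qs)"
  shows "constant_on_colors Qs ((transpose_mat X * X + c \<cdot>\<^sub>m 1\<^sub>m D) *\<^sub>v (Pi_mat D Qs *\<^sub>v v))"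
proof -
  let ?X' = "Pi_scaled n Ps * X * Pi_mat D Qs"
  have X': "?X' \<in> carrier_mat (length Ps) (length Qs)"
    using mult_carrier_mat[OF mult_carrier_mat[OF Pi_scaled_carrier X] Pi_mat_carrier] .
  have w: "Pi_mat D Qs *\<^sub>v v \<in> carrier_vec D" using mult_mat_vec_carrier[OF Pi_mat_carrier v] .
  have "X *\<^sub>v (Pi_mat D Qs *\<^sub>v v) = (X * Pi_mat D Qs) *\<^sub>v v"
    using assoc_mult_mat_vec[OF X Pi_mat_carrier v] by simp
  also have "\<dots> = Pi_mat n Ps *\<^sub>v (?X' *\<^sub>v v)"
    unfolding equitable_mult_Pi_mat[OF X P Q eq] using assoc_mult_mat_vec[OF Pi_mat_carrier X' v] .
  finally have "constant_on_colors Qs (transpose_mat X *\<^sub>v (X *\<^sub>v (Pi_mat D Qs *\<^sub>v v)))"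
    using equitable_transpose_Pi_mat_constant_on_colors[OF X P Q eq] X' v by simp
  then show ?thesis
    unfolding ridge_matrix_mult_vec[OF X w] using X w
    by (intro constant_on_colors_add[OF Q] constant_on_colors_smult[OF Q]
        constant_on_colors_Pi_mat_mult_vec[OF Q v]) auto
qed

lemma equitable_reduced_system_lhs:
  fixes X :: "real mat" and n D :: nat and Ps Qs :: "nat set list"
  defines "X' \<equiv> Pi_scaled n Ps * X * Pi_mat D Qs"
  assumes X: "X \<in> carrier_mat n D" and P: "is_partition_list {0..<n} Ps"
    and Q: "is_partition_list {0..<D} Qs" and eq: "equitable Ps Qs X"
    and w': "w' \<in> carrier_vec (length Qs)"
  shows "(transpose_mat X' * (transpose_mat (Pi_mat n Ps) * Pi_mat n Ps) * X'
          + mat (length Qs) (length Qs) (\<lambda>(s, t). if s = t then c * real (card (Qs ! t)) else 0)) *\<^sub>v w'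
       = transpose_mat (Pi_mat D Qs) *\<^sub>v ((transpose_mat X * X + c \<cdot>\<^sub>m 1\<^sub>m D) *\<^sub>v (Pi_mat D Qs *\<^sub>v w'))"
    (is "(?G + ?Q') *\<^sub>v w' = _")
proof -
  let ?Pp = "Pi_mat n Ps" and ?Pq = "Pi_mat D Qs"
  have X'c: "X' \<in> carrier_mat (length Ps) (length Qs)"
    unfolding X'_def using mult_carrier_mat[OF mult_carrier_mat[OF Pi_scaled_carrier X] Pi_mat_carrier] .
  have tX'c: "transpose_mat X' \<in> carrier_mat (length Qs) (length Ps)" using X'c by simp
  have tPp: "transpose_mat ?Pp \<in> carrier_mat (length Ps) n" by simp
  have tPq: "transpose_mat ?Pq \<in> carrier_mat (length Qs) D" by simp
  have tX: "transpose_mat X \<in> carrier_mat D n" using X by simp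
  have W'c: "transpose_mat ?Pp * ?Pp \<in> carrier_mat (length Ps) (length Ps)"
    using mult_carrier_mat[OF tPp Pi_mat_carrier] .
  have X'w': "X' *\<^sub>v w' \<in> carrier_vec (length Ps)" using X'c w' by simp
  have Pqw': "?Pq *\<^sub>v w' \<in> carrier_vec D" using mult_mat_vec_carrier[OF Pi_mat_carrier w'] .
  have XPqw': "X *\<^sub>v (?Pq *\<^sub>v w') \<in> carrier_vec n" using mult_mat_vec_carrier[OF X Pqw'] .
  have "?G *\<^sub>v w' = (transpose_mat X' * transpose_mat ?Pp) *\<^sub>v ((?Pp * X') *\<^sub>v w')"
    using assoc_mult_mat_vec[OF mult_carrier_mat[OF tX'c W'c] X'c w'] assoc_mult_mat_vec[OF tX'c W'c X'w']
      assoc_mult_mat_vec[OF tPp Pi_mat_carrier X'w'] assoc_mult_mat_vec[OF tX'c tPp mult_mat_vec_carrier[OF Pi_mat_carrier X'w']]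
      assoc_mult_mat_vec[OF Pi_mat_carrier X'c w'] X'w' by simp
  also have "\<dots> = transpose_mat ?Pq *\<^sub>v (transpose_mat X *\<^sub>v (X *\<^sub>v (?Pq *\<^sub>v w')))"
    unfolding X'_def equitable_transpose_mult_Pi_mat[OF X P Q eq]
      equitable_mult_Pi_mat[OF X P Q eq, symmetric]
    using assoc_mult_mat_vec[OF tPq tX XPqw']
      assoc_mult_mat_vec[OF X Pi_mat_carrier w'] by simp
  finally have G: "?G *\<^sub>v w' = transpose_mat ?Pq *\<^sub>v (transpose_mat X *\<^sub>v (X *\<^sub>v (?Pq *\<^sub>v w')))" .
  have "?Q' = c \<cdot>\<^sub>m (transpose_mat ?Pq * ?Pq)"
    unfolding transpose_Pi_mat_mult_Pi_mat[OF Q] by (intro eq_matI) (auto simp: mat_diag_def)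
  then have Q': "?Q' *\<^sub>v w' = transpose_mat ?Pq *\<^sub>v (c \<cdot>\<^sub>v (?Pq *\<^sub>v w'))"
    using smult_mat_mult_vec[OF mult_carrier_mat[OF tPq Pi_mat_carrier] w']
      assoc_mult_mat_vec[OF tPq Pi_mat_carrier w'] mult_mat_vec[OF tPq Pqw'] by simp
  have "(?G + ?Q') *\<^sub>v w' = ?G *\<^sub>v w' + ?Q' *\<^sub>v w'"
    using mult_carrier_mat[OF mult_carrier_mat[OF tX'c W'c] X'c] w'
    by (intro add_mult_distrib_mat_vec) auto
  also have "\<dots> = transpose_mat ?Pq *\<^sub>v ((transpose_mat X * X + c \<cdot>\<^sub>m 1\<^sub>m D) *\<^sub>v (?Pq *\<^sub>v w'))"
    unfolding G Q' ridge_matrix_mult_vec[OF X Pqw'] using X Pqw'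
    by (intro mult_add_distrib_mat_vec[OF tPq, symmetric]) auto
  finally show ?thesis .
qed

lemma equitable_reduced_system_rhs:
  fixes X :: "real mat" and n D :: nat and Ps Qs :: "nat set list"
  defines "X' \<equiv> Pi_scaled n Ps * X * Pi_mat D Qs"
  assumes X: "X \<in> carrier_mat n D" and y: "y \<in> carrier_vec n"
    and P: "is_partition_list {0..<n} Ps" and Q: "is_partition_list {0..<D} Qs"
    and eq: "equitable Ps Qs X"
  shows "transpose_mat X' * (transpose_mat (Pi_mat n Ps) * Pi_mat n Ps) *\<^sub>v (Pi_scaled n Ps *\<^sub>v y)
       = transpose_mat (Pi_mat D Qs) *\<^sub>v (transpose_mat X *\<^sub>v y)"
proof -
  let ?Pp = "Pi_mat n Ps" and ?Pq = "Pi_mat D Qs"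
  have tX'c: "transpose_mat X' \<in> carrier_mat (length Qs) (length Ps)"
    unfolding X'_def using mult_carrier_mat[OF mult_carrier_mat[OF Pi_scaled_carrier X] Pi_mat_carrier] by simp
  have tPp: "transpose_mat ?Pp \<in> carrier_mat (length Ps) n" by simp
  have tPq: "transpose_mat ?Pq \<in> carrier_mat (length Qs) D" by simp
  have tX: "transpose_mat X \<in> carrier_mat D n" using X by simp
  have W'c: "transpose_mat ?Pp * ?Pp \<in> carrier_mat (length Ps) (length Ps)"
    using mult_carrier_mat[OF tPp Pi_mat_carrier] .
  have "transpose_mat X' * (transpose_mat ?Pp * ?Pp) *\<^sub>v (Pi_scaled n Ps *\<^sub>v y)
      = transpose_mat X' *\<^sub>v ((transpose_mat ?Pp * ?Pp * Pi_scaled n Ps) *\<^sub>v y)"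
    using assoc_mult_mat_vec[OF tX'c W'c mult_mat_vec_carrier[OF Pi_scaled_carrier y]]
      assoc_mult_mat_vec[OF W'c Pi_scaled_carrier y] by simp
  also have "\<dots> = (transpose_mat X' * transpose_mat ?Pp) *\<^sub>v y"
    unfolding transpose_Pi_mat_mult_Pi_mat_mult_Pi_scaled[OF P]
    using assoc_mult_mat_vec[OF tX'c tPp y] by simp
  also have "\<dots> = transpose_mat ?Pq *\<^sub>v (transpose_mat X *\<^sub>v y)"
    unfolding X'_def equitable_transpose_mult_Pi_mat[OF X P Q eq]
    using assoc_mult_mat_vec[OF tPq tX y] by simp
  finally show ?thesis .
qed

theorem mainTheorem8:
  fixes n D :: nat and X :: "real mat" and y :: "real vec" and lambda2 :: real
    and Ps Qs :: "nat set list" and w' :: "real vec"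
  assumes X: "X \<in> carrier_mat n D"
    and y: "y \<in> carrier_vec n"
    and lam: "lambda2 > 0"
    and Q: "is_partition_list {0..<D} Qs"
    and P: "is_partition_list {0..<n} Ps"
    and eq: "equitable Ps Qs X"
    and Xy: "\<forall>T\<in>set Qs. \<forall>j1\<in>T. \<forall>j2\<in>T. (transpose_mat X *\<^sub>v y) $ j1 = (transpose_mat X *\<^sub>v y) $ j2"
    and w': "w' \<in> carrier_vec (length Qs)"
    and opt: "let X' = Pi_scaled n Ps * X * Pi_mat D Qs;
                  y' = Pi_scaled n Ps *\<^sub>v y;
                  W' = transpose_mat (Pi_mat n Ps) * Pi_mat n Ps;
                  Q' = mat (length Qs) (length Qs)
                         (\<lambda>(s, t). if s = t then lambda2 * real (card (Qs ! t)) else 0)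
              in (transpose_mat X' * W' * X' + Q') *\<^sub>v w' = transpose_mat X' * W' *\<^sub>v y'"
  shows "\<exists>M. mat_inverse (transpose_mat X * X + lambda2 \<cdot>\<^sub>m 1\<^sub>m D) = Some M \<and>
             Pi_mat D Qs *\<^sub>v w' = M *\<^sub>v (transpose_mat X *\<^sub>v y)"
proof -
  let ?A = "transpose_mat X * X + lambda2 \<cdot>\<^sub>m 1\<^sub>m D"
  let ?w = "Pi_mat D Qs *\<^sub>v w'"
  let ?b = "transpose_mat X *\<^sub>v y"
  have A: "?A \<in> carrier_mat D D" using X by simp
  have w: "?w \<in> carrier_vec D" using mult_mat_vec_carrier[OF Pi_mat_carrier w'] .
  have "transpose_mat (Pi_mat D Qs) *\<^sub>v (?A *\<^sub>v ?w) = transpose_mat (Pi_mat D Qs) *\<^sub>v ?b"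
    using opt unfolding Let_def equitable_reduced_system_lhs[OF X P Q eq w']
      equitable_reduced_system_rhs[OF X y P Q eq] .
  then have normal_equation: "?A *\<^sub>v ?w = ?b"
    using Xy unfolding constant_on_colors_def[symmetric] using X y
    by (intro constant_on_colors_eq_if_color_sums_eq[OF Q mult_mat_vec_carrier[OF A w]]
        equitable_ridge_matrix_constant_on_colors[OF X P Q eq w']) auto
  obtain M where M: "mat_inverse ?A = Some M" "M * ?A = 1\<^sub>m D" "M \<in> carrier_mat D D"
    using ridge_matrix_inverse[OF X lam] .
  have "M *\<^sub>v ?b = (M * ?A) *\<^sub>v ?w"
    unfolding normal_equation[symmetric] using assoc_mult_mat_vec[OF M(3) A w] by simp
  then show ?thesis using M w by simp
qed

end
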